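(* For every instance $I=(h_1\ge\dots\ge h_n>0)$ of discrete BGT there exists an eventually periodic schedule $S^*$ (a finite prefix followed by infinitely many repetitions of a fixed finite block) with $\mathrm{MH}(S^* )=\mathrm{OPT}(I)$. Moreover, for every schedule $S$ there is an eventually periodic schedule $S'$ with $\mathrm{MH}(S')\le\mathrm{MH}(S)$.
   Context: Discrete BGT: $n$ bamboos with growth rates $h_1\ge\dots\ge h_n>0$, initial heights $0$; a schedule is an infinite sequence $(i_1,i_2,\dots)$ over $\{1,\dots,n\}$, and at the end of day $j$ bamboo $b_{i_j}$ is cut to $0$ (one cut per day, no other cuts). Height of $b_i$ at time $t$ is $h_i$ times the time since its last cut (or since time $0$). $\mathrm{MH}(S)$ = supremum of all heights over all times; $\mathrm{OPT}(I)=\inf_S\mathrm{MH}(S)$. It is known that $\mathrm{OPT}(I)\le 2\sum_i h_i<\infty$. *)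

theory Defs
  imports "HOL-Analysis.Analysis" "HOL-Library.Extended_Real"
begin

text \<open>Bamboos are indexed 1..n, growth rates h 1 .. h n.
  A schedule is S :: nat => nat; day j (j >= 1) cuts bamboo S j at the end of
  day j, i.e. at time j. The value S 0 is irrelevant.\<close>

definition is_schedule :: "nat \<Rightarrow> (nat \<Rightarrow> nat) \<Rightarrow> bool" where
  "is_schedule n S \<longleftrightarrow> (\<forall>j\<ge>1. S j \<in> {1..n})"

definition eventually_periodic :: "(nat \<Rightarrow> nat) \<Rightarrow> bool" where
  "eventually_periodic S \<longleftrightarrow> (\<exists>m p. p > 0 \<and> (\<forall>j\<ge>m. S (j + p) = S j))"

definition last_cut :: "(nat \<Rightarrow> nat) \<Rightarrow> nat \<Rightarrow> real \<Rightarrow> nat" where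
  "last_cut S i t = Max (insert 0 {d. 1 \<le> d \<and> real d < t \<and> S d = i})"

definition height :: "(nat \<Rightarrow> real) \<Rightarrow> (nat \<Rightarrow> nat) \<Rightarrow> nat \<Rightarrow> real \<Rightarrow> real" where
  "height h S i t = h i * (t - real (last_cut S i t))"

definition MH :: "nat \<Rightarrow> (nat \<Rightarrow> real) \<Rightarrow> (nat \<Rightarrow> nat) \<Rightarrow> ereal" where
  "MH n h S = (SUP p \<in> {1..n} \<times> {t::real. 0 \<le> t}. ereal (height h S (fst p) (snd p)))"

definition OPT :: "nat \<Rightarrow> (nat \<Rightarrow> real) \<Rightarrow> ereal" where
  "OPT n h = (INF S \<in> {S. is_schedule n S}. MH n h S)"

end

theory Submission imports Defs begin

text \<open>Heights are largest just before a cut, so MH is a supremum over whole days of h_i times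
  the age of bamboo i, i.e. the number of days since its last cut. If MH S \<le> M then every age
  is at most M / h_n. Consequently MH takes only finitely many values below M, so the infimum
  over all schedules is attained; and the vector of ages of S recurs on two days j1 < j2, so
  repeating the block of days between them forever yields an eventually periodic schedule
  all of whose ages are ages of S, hence whose MH is no larger.\<close>

primrec age :: "(nat \<Rightarrow> nat) \<Rightarrow> nat \<Rightarrow> nat \<Rightarrow> nat" where
  "age S i 0 = 0"
| "age S i (Suc j) = (if 1 \<le> j \<and> S j = i then 1 else Suc (age S i j))"

lemma last_cut_of_nat: "last_cut S i (real j) = Max (insert 0 {d. 1 \<le> d \<and> d < j \<and> S d = i})"
  unfolding last_cut_def by simp

lemma finite_cut_days: "finite {d. 1 \<le> d \<and> d < (j::nat) \<and> S d = i}"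
  by (rule finite_subset[of _ "{..<j}"]) auto

lemma last_cut_of_nat_le: "last_cut S i (real j) \<le> j"
  unfolding last_cut_of_nat using finite_cut_days by (subst Max_le_iff) auto

lemma last_cut_of_nat_Suc:
  "last_cut S i (real (Suc j)) = (if 1 \<le> j \<and> S j = i then j else last_cut S i (real j))"
proof -
  let ?B = "{d. 1 \<le> d \<and> d < j \<and> S d = i}"
  have "{d. 1 \<le> d \<and> d < Suc j \<and> S d = i} = (if 1 \<le> j \<and> S j = i then insert j ?B else ?B)"
    by (auto simp: less_Suc_eq)
  moreover have "Max (insert 0 (insert j ?B)) = j"
    by (rule Max_eqI) (use finite_cut_days in auto)
  ultimately show ?thesis
    unfolding last_cut_of_nat by auto
qed

lemma age_eq_diff_last_cut: "age S i j = j - last_cut S i (real j)"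
proof (induction j)
  case 0
  then show ?case by (simp add: last_cut_of_nat)
next
  case (Suc j)
  then show ?case
    using last_cut_of_nat_le[of S i j] by (simp add: last_cut_of_nat_Suc Suc_diff_le del: of_nat_Suc)
qed

lemma height_of_nat: "height h S i (real j) = h i * real (age S i j)"
  unfolding height_def age_eq_diff_last_cut using last_cut_of_nat_le[of S i j] by (simp add: of_nat_diff)

lemma last_cut_ceiling:
  assumes "0 \<le> t"
  shows "last_cut S i t = last_cut S i (real (nat \<lceil>t\<rceil>))"
proof -
  have "real d < t \<longleftrightarrow> real d < real (nat \<lceil>t\<rceil>)" for d :: nat
  proof -
    have "real d < t \<longleftrightarrow> int d < \<lceil>t\<rceil>"
      using less_ceiling_iff[of "int d" t] by simp
    also have "\<dots> \<longleftrightarrow> real d < real (nat \<lceil>t\<rceil>)" using assms by linarith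
    finally show ?thesis .
  qed
  then show ?thesis unfolding last_cut_def by simp
qed

lemma height_le_age_ceiling:
  assumes "0 \<le> t" "0 \<le> h i"
  shows "height h S i t \<le> h i * real (age S i (nat \<lceil>t\<rceil>))"
proof -
  have "t \<le> real (nat \<lceil>t\<rceil>)" using assms(1) by linarith
  then have "height h S i t \<le> height h S i (real (nat \<lceil>t\<rceil>))"
    unfolding height_def using last_cut_ceiling[OF assms(1), of S i] assms(2)
    by (intro mult_left_mono) auto
  then show ?thesis by (simp add: height_of_nat)
qed

lemma MH_eq_SUP_age:
  assumes "\<forall>i\<in>{1..n}. 0 \<le> h i"
  shows "MH n h S = (SUP (i, j)\<in>{1..n} \<times> UNIV. ereal (h i * real (age S i j)))"
  unfolding MH_def
proof (rule antisym; rule SUP_least)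
  fix p :: "nat \<times> real" assume p: "p \<in> {1..n} \<times> {t. 0 \<le> t}"
  show "ereal (height h S (fst p) (snd p)) \<le> (SUP (i, j)\<in>{1..n} \<times> UNIV. ereal (h i * real (age S i j)))"
    by (rule SUP_upper2[of "(fst p, nat \<lceil>snd p\<rceil>)"]) (use p assms height_le_age_ceiling in auto)
next
  fix p :: "nat \<times> nat" assume p: "p \<in> {1..n} \<times> UNIV"
  show "(case p of (i, j) \<Rightarrow> ereal (h i * real (age S i j)))
      \<le> (SUP p\<in>{1..n} \<times> {t. 0 \<le> t}. ereal (height h S (fst p) (snd p)))"
    by (rule SUP_upper2[of "(fst p, real (snd p))"]) (use p in \<open>auto simp: height_of_nat\<close>)
qed

lemma height_age_le_MH: "i \<in> {1..n} \<Longrightarrow> ereal (h i * real (age S i j)) \<le> MH n h S"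
  unfolding MH_def by (rule SUP_upper2[of "(i, real j)"]) (auto simp: height_of_nat)

lemma MH_le_if_ages_recur:
  assumes "\<forall>i\<in>{1..n}. 0 \<le> h i" "\<And>i j. i \<in> {1..n} \<Longrightarrow> \<exists>j'. age S' i j = age S i j'"
  shows "MH n h S' \<le> MH n h S"
  unfolding MH_eq_SUP_age[OF assms(1), of S']
proof (rule SUP_least, clarify)
  fix i j assume "i \<in> {1..n}"
  with assms(2) obtain j' where "age S' i j = age S i j'" by blast
  then show "ereal (h i * real (age S' i j)) \<le> MH n h S"
    using height_age_le_MH \<open>i \<in> {1..n}\<close> by metis
qed

lemma age_le_if_MH_le:
  assumes "0 < c" "\<forall>i\<in>{1..n}. c \<le> h i" "MH n h S \<le> ereal M" "i \<in> {1..n}"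
  shows "age S i j \<le> nat \<lceil>M / c\<rceil>"
proof -
  have "c * real (age S i j) \<le> h i * real (age S i j)"
    using assms(2,4) by (intro mult_right_mono) auto
  also have "\<dots> \<le> M"
    using height_age_le_MH[OF assms(4)] assms(3) by (meson ereal_less_eq(3) order_trans)
  finally have "real (age S i j) \<le> M / c" using assms(1) by (simp add: field_simps)
  then show ?thesis by linarith
qed

lemma MH_in_finite_range:
  assumes "0 < c" "\<forall>i\<in>{1..n}. c \<le> h i" "n \<ge> 1" "MH n h S \<le> ereal M"
  shows "MH n h S \<in> (\<lambda>(i, a). ereal (h i * real a)) ` ({1..n} \<times> {..nat \<lceil>M / c\<rceil>})"
    (is "_ \<in> ?V")
proof -
  define A where "A = (\<lambda>(i, j). ereal (h i * real (age S i j))) ` ({1..n} \<times> UNIV)"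
  have "\<forall>i\<in>{1..n}. 0 \<le> h i" using assms(1,2) by (meson less_le_trans less_imp_le)
  then have "MH n h S = Sup A"
    unfolding A_def by (rule MH_eq_SUP_age)
  have "A \<subseteq> ?V"
  proof
    fix a assume "a \<in> A"
    then obtain i j where "i \<in> {1..n}" "a = ereal (h i * real (age S i j))"
      unfolding A_def by force
    then show "a \<in> ?V"
      using age_le_if_MH_le[OF assms(1,2,4)] by force
  qed
  then have "finite A" by (rule finite_subset) simp
  moreover have "A \<noteq> {}" unfolding A_def using assms(3) by auto
  ultimately have "Sup A \<in> A" by (simp add: cSup_eq_Max)
  with \<open>A \<subseteq> ?V\<close> \<open>MH n h S = Sup A\<close> show ?thesis by (simp only: subsetD)
qed

lemma constant_schedule: "n \<ge> 1 \<Longrightarrow> is_schedule n (\<lambda>_. 1) \<and> eventually_periodic (\<lambda>_. 1)"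
  unfolding is_schedule_def eventually_periodic_def by auto

lemma exists_optimal_schedule:
  assumes "0 < c" "\<forall>i\<in>{1..n}. c \<le> h i" "n \<ge> 1"
  obtains S where "is_schedule n S" "\<And>S'. is_schedule n S' \<Longrightarrow> MH n h S \<le> MH n h S'"
proof (cases "\<exists>S. is_schedule n S \<and> MH n h S \<noteq> \<infinity>")
  case False
  have "MH n h (\<lambda>_. 1) \<le> MH n h S'" if "is_schedule n S'" for S'
    using False that by simp
  then show ?thesis using constant_schedule[OF assms(3)] that by blast
next
  case True
  then obtain S0 where "is_schedule n S0" "MH n h S0 \<noteq> \<infinity>" by blast
  moreover then obtain B where "MH n h S0 \<le> ereal B" by (cases "MH n h S0") auto
  ultimately have S0: "is_schedule n S0" "MH n h S0 \<le> ereal B" by blast+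
  define W where "W = MH n h ` {S. is_schedule n S \<and> MH n h S \<le> ereal B}"
  have "W \<subseteq> (\<lambda>(i, a). ereal (h i * real a)) ` ({1..n} \<times> {..nat \<lceil>B / c\<rceil>})"
    unfolding W_def using MH_in_finite_range[OF assms] by blast
  then have "finite W" by (rule finite_subset) simp
  moreover have "W \<noteq> {}" unfolding W_def using S0 by blast
  ultimately have "Min W \<in> W" by (rule Min_in)
  then obtain S where S: "is_schedule n S" "MH n h S \<le> ereal B" "MH n h S = Min W"
    unfolding W_def by auto
  have "MH n h S \<le> MH n h S'" if "is_schedule n S'" for S'
  proof (cases "MH n h S' \<le> ereal B")
    case True
    with that have "MH n h S' \<in> W" unfolding W_def by blast
    then show ?thesis unfolding S(3) using \<open>finite W\<close> by (simp add: Min_le)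
  next
    case False
    then show ?thesis using S(2) by simp
  qed
  then show ?thesis using that S(1) by blast
qed

lemma ages_recur:
  assumes "\<forall>i\<in>{1..n}. \<forall>j. age S i j \<le> K"
  obtains j1 j2 where "1 \<le> j1" "j1 < j2" "\<forall>i\<in>{1..n}. age S i j1 = age S i j2"
proof -
  define f where "f j = (\<lambda>i\<in>{1..n}. age S i j)" for j
  have "f ` {1..} \<subseteq> PiE {1..n} (\<lambda>_. {..K})"
    using assms unfolding f_def by auto
  moreover have "finite (PiE {1..n} (\<lambda>_. {..K}))" by (rule finite_PiE) auto
  moreover have "infinite {1::nat..}" by (rule infinite_Ici)
  ultimately have "\<not> inj_on f {1..}" using inj_on_finite by blast
  then obtain x y where xy: "1 \<le> x" "1 \<le> y" "x \<noteq> y" "f x = f y"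
    unfolding inj_on_def by auto
  have "age S i x = age S i y" if "i \<in> {1..n}" for i
    using fun_cong[OF \<open>f x = f y\<close>, of i] that by (simp add: f_def)
  then show ?thesis
    using xy that[of x y] that[of y x] by (metis linorder_neq_iff)
qed

definition fold_time :: "nat \<Rightarrow> nat \<Rightarrow> nat \<Rightarrow> nat" where
  "fold_time j1 j2 j = (if j < j2 then j else j1 + (j - j2) mod (j2 - j1))"

lemma fold_time_periodic:
  assumes "j2 \<le> j"
  shows "fold_time j1 j2 (j + (j2 - j1)) = fold_time j1 j2 j"
proof -
  have "j + (j2 - j1) - j2 = (j - j2) + (j2 - j1)" using assms by simp
  then have "(j + (j2 - j1) - j2) mod (j2 - j1) = (j - j2) mod (j2 - j1)" by simp
  then show ?thesis using assms unfolding fold_time_def by simp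
qed

lemma fold_time_Suc:
  assumes "j1 < j2" "j2 \<le> j"
  shows "fold_time j1 j2 (Suc j) = (if Suc (fold_time j1 j2 j) = j2 then j1 else Suc (fold_time j1 j2 j))"
proof -
  have "Suc ((j - j2) mod (j2 - j1)) = j2 - j1 \<or> Suc ((j - j2) mod (j2 - j1)) < j2 - j1"
    using assms(1) by (metis Suc_leI le_neq_implies_less mod_less_divisor zero_less_diff)
  then show ?thesis
    using assms unfolding fold_time_def by (auto simp: Suc_diff_le mod_Suc)
qed

lemma age_fold_time:
  assumes "1 \<le> j1" "j1 < j2" "age S i j1 = age S i j2"
  shows "age (S \<circ> fold_time j1 j2) i j = age S i (fold_time j1 j2 j)"
proof (induction j)
  case 0
  then show ?case using assms(2) by (simp add: fold_time_def)
next
  case (Suc j)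
  let ?\<phi> = "fold_time j1 j2"
  show ?case
  proof (cases "Suc j \<le> j2")
    case True
    then have "?\<phi> j = j" "(S \<circ> ?\<phi>) j = S j" by (simp_all add: fold_time_def)
    then have "age (S \<circ> ?\<phi>) i (Suc j) = age S i (Suc j)"
      using Suc by (simp add: comp_def)
    moreover have "age S i (Suc j) = age S i (?\<phi> (Suc j))"
      using True assms(3) by (cases "Suc j = j2") (auto simp: fold_time_def)
    ultimately show ?thesis by (rule trans)
  next
    case False
    then have "j2 \<le> j" by simp
    have "j1 \<le> ?\<phi> j" using \<open>j2 \<le> j\<close> by (simp add: fold_time_def)
    then have "age (S \<circ> ?\<phi>) i (Suc j) = age S i (Suc (?\<phi> j))"
      using Suc \<open>j2 \<le> j\<close> assms(1,2) by (simp add: comp_def)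
    moreover have "age S i (Suc (?\<phi> j)) = age S i (?\<phi> (Suc j))"
      using fold_time_Suc[OF assms(2) \<open>j2 \<le> j\<close>] assms(3)
      by (cases "Suc (?\<phi> j) = j2") (simp_all del: age.simps)
    ultimately show ?thesis by (rule trans)
  qed
qed

lemma exists_periodic_schedule_MH_le:
  assumes "0 < c" "\<forall>i\<in>{1..n}. c \<le> h i" "is_schedule n S"
  obtains S' where "is_schedule n S'" "eventually_periodic S'" "MH n h S' \<le> MH n h S"
proof (cases "MH n h S = \<infinity>")
  case True
  have "n \<ge> 1" using assms(3) unfolding is_schedule_def by force
  then show ?thesis using that[of "\<lambda>_. 1"] constant_schedule True by simp
next
  case False
  then obtain M where "MH n h S \<le> ereal M" by (cases "MH n h S") auto
  then have "\<forall>i\<in>{1..n}. \<forall>j. age S i j \<le> nat \<lceil>M / c\<rceil>"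
    using age_le_if_MH_le[OF assms(1,2)] by blast
  then obtain j1 j2 where j: "1 \<le> j1" "j1 < j2" "\<forall>i\<in>{1..n}. age S i j1 = age S i j2"
    by (rule ages_recur)
  let ?S' = "S \<circ> fold_time j1 j2"
  have "is_schedule n ?S'"
    using assms(3) j(1) unfolding is_schedule_def fold_time_def by auto
  moreover have "eventually_periodic ?S'"
    unfolding eventually_periodic_def
  proof (rule exI[of _ j2], rule exI[of _ "j2 - j1"], intro conjI allI impI)
    show "0 < j2 - j1" using j(2) by simp
    show "?S' (k + (j2 - j1)) = ?S' k" if "j2 \<le> k" for k
      by (simp only: comp_apply fold_time_periodic[OF that])
  qed
  moreover have "MH n h ?S' \<le> MH n h S"
  proof (rule MH_le_if_ages_recur)
    show "\<forall>i\<in>{1..n}. 0 \<le> h i" using assms(1,2) by (meson less_le_trans less_imp_le)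
    show "\<exists>j'. age ?S' i j = age S i j'" if "i \<in> {1..n}" for i j
      using age_fold_time[OF j(1,2)] j(3) that by blast
  qed
  ultimately show ?thesis by (rule that)
qed

lemma MH_eq_OPT_if_optimal:
  assumes "is_schedule n S" "\<And>S'. is_schedule n S' \<Longrightarrow> MH n h S \<le> MH n h S'"
  shows "MH n h S = OPT n h"
  unfolding OPT_def by (rule antisym) (use assms in \<open>auto intro: INF_greatest INF_lower2\<close>)

theorem mainTheorem6:
  fixes n :: nat and h :: "nat \<Rightarrow> real"
  assumes "n \<ge> 1"
    and "\<forall>i\<in>{1..n}. h i > 0"
    and "\<forall>i j. 1 \<le> i \<longrightarrow> i \<le> j \<longrightarrow> j \<le> n \<longrightarrow> h j \<le> h i"
  shows "(\<exists>S. is_schedule n S \<and> eventually_periodic S \<and> MH n h S = OPT n h)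
       \<and> (\<forall>S. is_schedule n S \<longrightarrow>
            (\<exists>S'. is_schedule n S' \<and> eventually_periodic S' \<and> MH n h S' \<le> MH n h S))"
proof
  have hn: "0 < h n" "\<forall>i\<in>{1..n}. h n \<le> h i"
    using assms(1,2) assms(3)[rule_format, of _ n] by auto
  obtain S where S: "is_schedule n S" "\<And>S'. is_schedule n S' \<Longrightarrow> MH n h S \<le> MH n h S'"
    using exists_optimal_schedule[OF hn assms(1)] by blast
  obtain S' where S': "is_schedule n S'" "eventually_periodic S'" "MH n h S' \<le> MH n h S"
    using exists_periodic_schedule_MH_le[OF hn S(1)] by blast
  have "MH n h S' = MH n h S" using S'(1,3) S(2) by (simp add: antisym)
  then show "\<exists>S. is_schedule n S \<and> eventually_periodic S \<and> MH n h S = OPT n h"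
    using S' MH_eq_OPT_if_optimal[OF S] by auto
  show "\<forall>S. is_schedule n S \<longrightarrow>
          (\<exists>S'. is_schedule n S' \<and> eventually_periodic S' \<and> MH n h S' \<le> MH n h S)"
  proof (intro allI impI)
    fix S assume "is_schedule n S"
    from exists_periodic_schedule_MH_le[OF hn this]
    show "\<exists>S'. is_schedule n S' \<and> eventually_periodic S' \<and> MH n h S' \<le> MH n h S" by blast
  qed
qed

end
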